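(* Let $T$ be a tree with $t$ vertices, let $K>1$ and let $s$ be a positive integer. If $G$ is an $n$-vertex $K$-almost-regular $K_{s,s}$-free graph with average degree $d\ge (4Kt)^{6s}s^3$, then $G$ contains at least $n\left(\frac{d}{2K}\right)^{t-1}$ labeled induced copies of $T$.
   Context: A graph $G$ is $K$-almost-regular if $\Delta(G)\le K\delta(G)$, where $\Delta(G),\delta(G)$ are the maximum and minimum degrees. $G$ is $K_{s,s}$-free if it contains no copy of the complete bipartite graph $K_{s,s}$ as a subgraph. A labeled induced copy of $T$ in $G$ is an injective map $\varphi:V(T)\to V(G)$ such that for all distinct $u,v\in V(T)$, $\varphi(u)\varphi(v)\in E(G)$ if and only if $uv\in E(T)$. *)

theory Defs
  imports "HOL-Library.FuncSet" Complex_Main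
begin

definition simple_graph :: "'a set \<Rightarrow> 'a set set \<Rightarrow> bool" where
  "simple_graph V E \<longleftrightarrow> finite V \<and> (\<forall>e\<in>E. \<exists>u v. e = {u, v} \<and> u \<noteq> v \<and> u \<in> V \<and> v \<in> V)"

definition adj :: "'a set set \<Rightarrow> 'a \<Rightarrow> 'a \<Rightarrow> bool" where
  "adj E u v \<longleftrightarrow> {u, v} \<in> E"

definition degree :: "'a set \<Rightarrow> 'a set set \<Rightarrow> 'a \<Rightarrow> nat" where
  "degree V E v = card {u \<in> V. adj E u v}"

definition max_degree :: "'a set \<Rightarrow> 'a set set \<Rightarrow> nat" where
  "max_degree V E = Max (degree V E ` V)"

definition min_degree :: "'a set \<Rightarrow> 'a set set \<Rightarrow> nat" where
  "min_degree V E = Min (degree V E ` V)"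

definition almost_regular :: "real \<Rightarrow> 'a set \<Rightarrow> 'a set set \<Rightarrow> bool" where
  "almost_regular K V E \<longleftrightarrow> real (max_degree V E) \<le> K * real (min_degree V E)"

definition average_degree :: "'a set \<Rightarrow> 'a set set \<Rightarrow> real" where
  "average_degree V E = 2 * real (card E) / real (card V)"

definition Kss_free :: "nat \<Rightarrow> 'a set \<Rightarrow> 'a set set \<Rightarrow> bool" where
  "Kss_free s V E \<longleftrightarrow> \<not> (\<exists>A B. A \<subseteq> V \<and> B \<subseteq> V \<and> A \<inter> B = {} \<and> card A = s \<and> card B = s
      \<and> (\<forall>a\<in>A. \<forall>b\<in>B. adj E a b))"

definition is_walk :: "'a set \<Rightarrow> 'a set set \<Rightarrow> 'a list \<Rightarrow> bool" where
  "is_walk V E xs \<longleftrightarrow> xs \<noteq> [] \<and> set xs \<subseteq> V \<and> (\<forall>i. Suc i < length xs \<longrightarrow> adj E (xs ! i) (xs ! Suc i))"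

definition connected_graph :: "'a set \<Rightarrow> 'a set set \<Rightarrow> bool" where
  "connected_graph V E \<longleftrightarrow> V \<noteq> {} \<and>
     (\<forall>u\<in>V. \<forall>v\<in>V. \<exists>xs. is_walk V E xs \<and> hd xs = u \<and> last xs = v)"

definition is_cycle :: "'a set \<Rightarrow> 'a set set \<Rightarrow> 'a list \<Rightarrow> bool" where
  "is_cycle V E xs \<longleftrightarrow> is_walk V E xs \<and> distinct xs \<and> length xs \<ge> 3 \<and> adj E (last xs) (hd xs)"

definition is_tree :: "'a set \<Rightarrow> 'a set set \<Rightarrow> bool" where
  "is_tree V E \<longleftrightarrow> simple_graph V E \<and> connected_graph V E \<and> \<not> (\<exists>xs. is_cycle V E xs)"

(* labeled induced copies of (VT,ET) in (V,E): injective maps VT \<rightarrow> V (as extensional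
   functions, so that distinct maps are distinct objects) preserving adjacency and non-adjacency *)
definition induced_copies :: "'b set \<Rightarrow> 'b set set \<Rightarrow> 'a set \<Rightarrow> 'a set set \<Rightarrow> ('b \<Rightarrow> 'a) set" where
  "induced_copies VT ET V E = {\<phi> \<in> VT \<rightarrow>\<^sub>E V. inj_on \<phi> VT \<and>
      (\<forall>u\<in>VT. \<forall>v\<in>VT. u \<noteq> v \<longrightarrow> (adj E (\<phi> u) (\<phi> v) \<longleftrightarrow> adj ET u v))}"

end

theory Submission
  imports Defs
begin

(*
  Let delta >= d/K be the minimum degree and M = delta/(4t), and call an induced copy of a
  tree low-codegree if any two of its image vertices have fewer than M common neighbours.
  Double counting s-subsets of the neighbourhood of a vertex y shows, by K_{s,s}-freeness,
  that at most B = (s-1)(8Kt)^s vertices z have codegree(y, z) >= M.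

  Build T by adding leaves. If the leaf l hangs at p, a low-codegree copy of T - l extends
  to a low-codegree copy of T by sending l to any neighbour x of the image of p that is not
  an image vertex, not adjacent to another image vertex and of codegree < M with all of them.
  The codegree condition on the copy of T - l is what makes the second requirement cheap:
  the neighbours of the image of p adjacent to another image vertex number at most t M.
  Hence at most t (1 + M + B) <= delta/2 neighbours are excluded, every copy extends in at
  least delta/2 ways, and there are at least n (delta/2)^(t-1) >= n (d/(2K))^(t-1) copies.
*)

lemma adj_commute: "adj E u v \<longleftrightarrow> adj E v u"
  by (simp add: adj_def insert_commute)

lemma adj_sym: "adj E u v \<Longrightarrow> adj E v u"
  by (simp add: adj_commute)

lemma simple_graph_not_adj_self: "simple_graph V E \<Longrightarrow> \<not> adj E u u"
  unfolding simple_graph_def adj_def by (metis doubleton_eq_iff insert_absorb2)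

lemma simple_graph_adj_in_vertices: "simple_graph V E \<Longrightarrow> adj E u v \<Longrightarrow> u \<in> V \<and> v \<in> V"
  unfolding simple_graph_def adj_def by (metis doubleton_eq_iff)

section \<open>Paths and leaves of trees\<close>

lemma is_walk_iff_successively:
  "is_walk V E xs \<longleftrightarrow> xs \<noteq> [] \<and> set xs \<subseteq> V \<and> successively (adj E) xs"
  unfolding is_walk_def successively_conv_nth by auto

definition is_path :: "'a set \<Rightarrow> 'a set set \<Rightarrow> 'a list \<Rightarrow> bool" where
  "is_path V E xs \<longleftrightarrow> is_walk V E xs \<and> distinct xs"

lemma successively_obtain_distinct:
  assumes "successively P xs" "xs \<noteq> []"
  obtains ys where "successively P ys" "distinct ys" "ys \<noteq> []"
    "hd ys = hd xs" "last ys = last xs" "set ys \<subseteq> set xs"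
proof -
  have "\<exists>ys. successively P ys \<and> distinct ys \<and> ys \<noteq> [] \<and>
      hd ys = hd xs \<and> last ys = last xs \<and> set ys \<subseteq> set xs"
    using assms
  proof (induction "length xs" arbitrary: xs rule: less_induct)
    case less
    show ?case
    proof (cases "distinct xs")
      case True
      then show ?thesis using less.prems by blast
    next
      case False
      then obtain a b c y where xs: "xs = a @ [y] @ b @ [y] @ c"
        using not_distinct_decomp by blast
      let ?zs = "a @ y # c"
      have "successively P ?zs"
        using less.prems(1) unfolding xs by (auto simp: successively_append_iff successively_Cons)
      moreover have "length ?zs < length xs" "hd ?zs = hd xs" "last ?zs = last xs"
          "set ?zs \<subseteq> set xs"
        using xs by (auto simp: hd_append)
      moreover have "?zs \<noteq> []" by simp
      ultimately obtain ys where "successively P ys" "distinct ys" "ys \<noteq> []"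
          "hd ys = hd ?zs" "last ys = last ?zs" "set ys \<subseteq> set ?zs"
        using less.hyps by blast
      then show ?thesis using \<open>hd ?zs = hd xs\<close> \<open>last ?zs = last xs\<close> \<open>set ?zs \<subseteq> set xs\<close> by auto
    qed
  qed
  then show ?thesis using that by blast
qed

lemma connected_graph_obtain_path:
  assumes "connected_graph V E" "u \<in> V" "v \<in> V"
  obtains ys where "is_path V E ys" "hd ys = u" "last ys = v"
proof -
  obtain xs where xs: "xs \<noteq> []" "set xs \<subseteq> V" "successively (adj E) xs" "hd xs = u" "last xs = v"
    using assms unfolding connected_graph_def is_walk_iff_successively by blast
  obtain ys where "successively (adj E) ys" "distinct ys" "ys \<noteq> []"
      "hd ys = hd xs" "last ys = last xs" "set ys \<subseteq> set xs"
    by (rule successively_obtain_distinct[OF xs(3) xs(1)])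
  then show ?thesis
    using that xs unfolding is_path_def is_walk_iff_successively by auto
qed

lemma acyclic_longest_path_end_adj:
  assumes sg: "simple_graph V E" and acyclic: "\<nexists>zs. is_cycle V E zs"
    and path: "is_path V E (xs @ [p, l])"
    and longest: "\<And>ys. is_path V E ys \<Longrightarrow> length ys \<le> length (xs @ [p, l])"
    and "adj E l w"
  shows "w = p"
proof (rule ccontr)
  assume "w \<noteq> p"
  have walk: "successively (adj E) (xs @ [p, l])" "distinct (xs @ [p, l])" "set (xs @ [p, l]) \<subseteq> V"
    using path unfolding is_path_def is_walk_iff_successively by auto
  show False
  proof (cases "w \<in> set (xs @ [p, l])")
    case False
    have "w \<in> V" using simple_graph_adj_in_vertices[OF sg \<open>adj E l w\<close>] by blast
    then have longer: "is_path V E (xs @ [p, l] @ [w])"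
      using walk False \<open>adj E l w\<close>
      unfolding is_path_def is_walk_iff_successively by (auto simp: successively_append_iff)
    show False using longest[OF longer] by simp
  next
    case True
    have "w \<noteq> l" using \<open>adj E l w\<close> simple_graph_not_adj_self[OF sg] by blast
    then have "w \<in> set xs" using True \<open>w \<noteq> p\<close> by auto
    then obtain b c where "xs = b @ w # c" by (meson split_list)
    then have "is_cycle V E (w # c @ [p, l])"
      using walk \<open>adj E l w\<close>
      unfolding is_cycle_def is_walk_iff_successively
      by (auto simp: successively_append_iff adj_commute)
    then show False using acyclic by blast
  qed
qed

lemma tree_finite: "is_tree VT ET \<Longrightarrow> finite VT"
  unfolding is_tree_def simple_graph_def by blast

lemma tree_card_pos: "is_tree VT ET \<Longrightarrow> card VT > 0"
  unfolding is_tree_def simple_graph_def connected_graph_def by (simp add: card_gt_0_iff)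

lemma tree_obtain_leaf:
  assumes T: "is_tree VT ET" and two: "card VT \<ge> 2"
  obtains l p where "l \<in> VT" "p \<in> VT" "l \<noteq> p" "adj ET l p" "\<forall>w. adj ET l w \<longrightarrow> w = p"
proof -
  have sg: "simple_graph VT ET" and conn: "connected_graph VT ET"
    and acyclic: "\<nexists>zs. is_cycle VT ET zs"
    using T unfolding is_tree_def by blast+
  have fin: "finite VT" using T by (rule tree_finite)
  have "\<not> (\<forall>a\<in>VT. \<forall>b\<in>VT. a = b)" using two card_le_Suc0_iff_eq[OF fin] by auto
  then obtain u v where uv: "u \<in> VT" "v \<in> VT" "u \<noteq> v" by blast
  obtain ys0 where ys0: "is_path VT ET ys0" "hd ys0 = u" "last ys0 = v"
    by (rule connected_graph_obtain_path[OF conn uv(1,2)])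
  have bounded: "length ys \<le> card VT" if "is_path VT ET ys" for ys
  proof -
    have "distinct ys" "set ys \<subseteq> VT" using that unfolding is_path_def is_walk_def by auto
    then show ?thesis using distinct_card[of ys] card_mono[OF fin, of "set ys"] by simp
  qed
  have "\<exists>xs. is_path VT ET xs \<and> (\<forall>ys. is_path VT ET ys \<longrightarrow> length ys \<le> length xs)"
    by (rule ex_has_greatest_nat[of _ ys0 _ "Suc (card VT)"])
      (use ys0(1) bounded in \<open>auto simp: less_Suc_eq_le\<close>)
  then obtain xs where xs: "is_path VT ET xs"
    and longest: "\<And>ys. is_path VT ET ys \<Longrightarrow> length ys \<le> length xs"
    by blast
  have "ys0 \<noteq> []" using ys0(1) unfolding is_path_def is_walk_def by blast
  then have "length ys0 \<ge> 2"
    using ys0(2,3) uv(3) by (cases ys0; cases "tl ys0") auto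
  then have "length xs \<ge> 2" using longest[OF ys0(1)] by simp
  then obtain ws p l where xs_eq: "xs = ws @ [p, l]"
    by (cases xs rule: rev_cases; cases "butlast xs" rule: rev_cases) auto
  have "adj ET p l" "p \<noteq> l" "p \<in> VT" "l \<in> VT"
    using xs unfolding xs_eq is_path_def is_walk_iff_successively
    by (auto simp: successively_append_iff)
  moreover have "\<forall>w. adj ET l w \<longrightarrow> w = p"
    using acyclic_longest_path_end_adj[OF sg acyclic xs[unfolded xs_eq] longest[unfolded xs_eq]]
    by blast
  ultimately show ?thesis using that[of l p] adj_commute[of ET l p] by blast
qed

definition edges_without :: "'b \<Rightarrow> 'b set set \<Rightarrow> 'b set set" where
  "edges_without l E = {e \<in> E. l \<notin> e}"

lemma adj_edges_without: "adj (edges_without l E) u v \<longleftrightarrow> adj E u v \<and> u \<noteq> l \<and> v \<noteq> l"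
  unfolding adj_def edges_without_def by auto

lemma path_avoids_leaf:
  assumes "is_path V E ys" "hd ys \<noteq> l" "last ys \<noteq> l" and leaf: "\<forall>w. adj E l w \<longrightarrow> w = p"
  shows "l \<notin> set ys"
proof
  assume "l \<in> set ys"
  then obtain a b where ab: "ys = a @ l # b" by (meson split_list)
  have "a \<noteq> []" "b \<noteq> []" using ab assms(2,3) by auto
  have "successively (adj E) ys" "distinct ys"
    using assms(1) unfolding is_path_def is_walk_iff_successively by auto
  then have "adj E (last a) l" "adj E l (hd b)"
    using \<open>a \<noteq> []\<close> \<open>b \<noteq> []\<close> unfolding ab
    by (auto simp: successively_append_iff successively_Cons)
  then have "last a = hd b" using leaf adj_commute by metis
  then show False
    using \<open>distinct ys\<close> \<open>a \<noteq> []\<close> \<open>b \<noteq> []\<close> unfolding ab by (auto dest: last_in_set hd_in_set)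
qed

lemma tree_remove_leaf:
  assumes T: "is_tree VT ET" and two: "card VT \<ge> 2" and leaf: "\<forall>w. adj ET l w \<longrightarrow> w = p"
  shows "is_tree (VT - {l}) (edges_without l ET)"
proof -
  have sg: "simple_graph VT ET" and conn: "connected_graph VT ET"
    using T unfolding is_tree_def by blast+
  have "simple_graph (VT - {l}) (edges_without l ET)"
    using sg unfolding simple_graph_def edges_without_def by fastforce
  moreover have "VT - {l} \<noteq> {}"
  proof
    assume "VT - {l} = {}"
    then have "card VT \<le> 1" using card_mono[of "{l}" VT] by auto
    then show False using two by simp
  qed
  moreover have "\<exists>ys. is_walk (VT - {l}) (edges_without l ET) ys \<and> hd ys = u \<and> last ys = v"
    if "u \<in> VT - {l}" "v \<in> VT - {l}" for u v
  proof -
    have "u \<in> VT" "v \<in> VT" using that by auto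
    then obtain ys where ys: "is_path VT ET ys" "hd ys = u" "last ys = v"
      by (rule connected_graph_obtain_path[OF conn])
    have "l \<notin> set ys" using path_avoids_leaf[OF ys(1) _ _ leaf] ys that by blast
    then have "is_walk (VT - {l}) (edges_without l ET) ys"
      using ys(1) unfolding is_path_def is_walk_def by (auto simp: adj_edges_without)
    then show ?thesis using ys by blast
  qed
  moreover have "\<not> is_cycle (VT - {l}) (edges_without l ET) zs" for zs
  proof
    assume "is_cycle (VT - {l}) (edges_without l ET) zs"
    then have "is_cycle VT ET zs"
      unfolding is_cycle_def is_walk_def by (auto simp: adj_edges_without)
    then show False using T unfolding is_tree_def by blast
  qed
  ultimately show ?thesis unfolding is_tree_def connected_graph_def by blast
qed

section \<open>Degrees and codegrees in \<open>K\<^sub>s\<^sub>,\<^sub>s\<close>-free graphs\<close>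

lemma sum_degree_eq_twice_card_edges:
  assumes sg: "simple_graph V E"
  shows "(\<Sum>v\<in>V. degree V E v) = 2 * card E"
proof -
  have fin: "finite V" and edge: "\<And>e. e \<in> E \<Longrightarrow> \<exists>u v. e = {u, v} \<and> u \<noteq> v \<and> u \<in> V \<and> v \<in> V"
    using sg unfolding simple_graph_def by blast+
  have finE: "finite E"
    using edge by (intro finite_subset[OF _ finite_Pow_iff[THEN iffD2, OF fin]]) blast
  define arcs where "arcs e = {(u, v). {u, v} = e}" for e :: "'a set"
  have card_arcs: "card (arcs e) = 2" if e: "e \<in> E" for e
  proof -
    obtain u v where "e = {u, v}" "u \<noteq> v" using edge[OF e] by blast
    then have "arcs e = {(u, v), (v, u)}" unfolding arcs_def by (auto simp: doubleton_eq_iff)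
    then show ?thesis using \<open>u \<noteq> v\<close> by simp
  qed
  have arcs_cover: "(SIGMA u:V. {v \<in> V. adj E u v}) = (\<Union>e\<in>E. arcs e)"
    using simple_graph_adj_in_vertices[OF sg] unfolding arcs_def by (auto simp: adj_def)
  have "(\<Sum>u\<in>V. card {v \<in> V. adj E u v}) = card (SIGMA u:V. {v \<in> V. adj E u v})"
    using fin by (simp add: card_SigmaI)
  also have "\<dots> = card (\<Union>e\<in>E. arcs e)" by (simp only: arcs_cover)
  also have "\<dots> = (\<Sum>e\<in>E. card (arcs e))"
  proof (rule card_UN_disjoint[OF finE])
    show "\<forall>e\<in>E. finite (arcs e)" using card_arcs by (metis card_ge_0_finite zero_less_numeral)
    show "\<forall>e\<in>E. \<forall>e'\<in>E. e \<noteq> e' \<longrightarrow> arcs e \<inter> arcs e' = {}" unfolding arcs_def by blast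
  qed
  also have "\<dots> = 2 * card E" using card_arcs by simp
  finally show ?thesis
    unfolding degree_def by (simp add: adj_commute)
qed

lemma min_degree_le_degree: "finite V \<Longrightarrow> v \<in> V \<Longrightarrow> min_degree V E \<le> degree V E v"
  unfolding min_degree_def by simp

lemma degree_le_max_degree: "finite V \<Longrightarrow> v \<in> V \<Longrightarrow> degree V E v \<le> max_degree V E"
  unfolding max_degree_def by simp

lemma average_degree_le_max_degree:
  assumes sg: "simple_graph V E" and "V \<noteq> {}"
  shows "average_degree V E \<le> real (max_degree V E)"
proof -
  have fin: "finite V" using sg unfolding simple_graph_def by blast
  have "2 * card E \<le> card V * max_degree V E"
    unfolding sum_degree_eq_twice_card_edges[OF sg, symmetric]
    using sum_bounded_above[of V "degree V E" "max_degree V E"] degree_le_max_degree[OF fin] by simp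
  then have "2 * real (card E) \<le> real (card V) * real (max_degree V E)"
    by (metis of_nat_mono of_nat_mult of_nat_numeral)
  then show ?thesis
    using fin \<open>V \<noteq> {}\<close> unfolding average_degree_def by (simp add: divide_le_eq mult.commute)
qed

definition codegree :: "'a set \<Rightarrow> 'a set set \<Rightarrow> 'a \<Rightarrow> 'a \<Rightarrow> nat" where
  "codegree V E y z = card {w \<in> V. adj E y w \<and> adj E z w}"

lemma codegree_commute: "codegree V E y z = codegree V E z y"
  unfolding codegree_def by (simp add: conj_commute)

lemma Kss_free_card_common_neighbours_less:
  assumes sg: "simple_graph V E" and free: "Kss_free s V E" and S: "S \<subseteq> V" "card S = s"
  shows "card {z \<in> V. \<forall>w\<in>S. adj E z w} < s"
proof (rule ccontr)
  assume "\<not> ?thesis"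
  then obtain B where B: "B \<subseteq> {z \<in> V. \<forall>w\<in>S. adj E z w}" "card B = s"
    using obtain_subset_with_card_n[of s "{z \<in> V. \<forall>w\<in>S. adj E z w}"] by auto
  have "S \<inter> B = {}" using B(1) simple_graph_not_adj_self[OF sg] by blast
  moreover have "\<forall>a\<in>S. \<forall>b\<in>B. adj E a b" using B(1) by (blast intro: adj_sym)
  moreover have "B \<subseteq> V" using B(1) by blast
  ultimately have "\<exists>A B. A \<subseteq> V \<and> B \<subseteq> V \<and> A \<inter> B = {} \<and> card A = s \<and> card B = s
      \<and> (\<forall>a\<in>A. \<forall>b\<in>B. adj E a b)"
    using S B(2) by blast
  then show False using free unfolding Kss_free_def by blast
qed

lemma sum_codegree_choose_le:
  assumes sg: "simple_graph V E" and free: "Kss_free s V E"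
  shows "(\<Sum>z\<in>V. codegree V E y z choose s) \<le> (s - 1) * (degree V E y choose s)"
proof -
  have fin: "finite V" using sg unfolding simple_graph_def by blast
  define N where "N = {w \<in> V. adj E y w}"
  define common where "common z = {w \<in> V. adj E y w \<and> adj E z w}" for z
  define subsets where "subsets = {S. S \<subseteq> N \<and> card S = s}"
  have finN: "finite N" using fin unfolding N_def by simp
  have fin_subsets: "finite subsets" unfolding subsets_def using finN by simp
  have common_N: "common z \<subseteq> N" for z unfolding common_def N_def by blast
  \<comment> \<open>Double count pairs (S, z) with S an s-subset of the common neighbourhood of y and z;
      for fixed S there are fewer than s such z.\<close>
  have "(\<Sum>z\<in>V. codegree V E y z choose s) = (\<Sum>z\<in>V. card {S \<in> subsets. S \<subseteq> common z})"
  proof (rule sum.cong[OF refl])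
    fix z
    have "{S \<in> subsets. S \<subseteq> common z} = {S. S \<subseteq> common z \<and> card S = s}"
      unfolding subsets_def using common_N by blast
    then show "codegree V E y z choose s = card {S \<in> subsets. S \<subseteq> common z}"
      using n_subsets[OF finite_subset[OF common_N finN]] unfolding codegree_def common_def by simp
  qed
  also have "\<dots> = (\<Sum>z\<in>V. \<Sum>S\<in>subsets. if S \<subseteq> common z then 1 else 0)"
    using sum.inter_filter[OF fin_subsets, of "\<lambda>_. 1::nat"] by simp
  also have "\<dots> = (\<Sum>S\<in>subsets. \<Sum>z\<in>V. if S \<subseteq> common z then 1 else 0)"
    by (rule sum.swap)
  also have "\<dots> = (\<Sum>S\<in>subsets. card {z \<in> V. S \<subseteq> common z})"
    using sum.inter_filter[OF fin, of "\<lambda>_. 1::nat"] by simp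
  also have "\<dots> \<le> (\<Sum>S\<in>subsets. s - 1)"
  proof (rule sum_mono)
    fix S assume "S \<in> subsets"
    then have S: "S \<subseteq> V" "card S = s" unfolding subsets_def N_def by auto
    have "{z \<in> V. S \<subseteq> common z} \<subseteq> {z \<in> V. \<forall>w\<in>S. adj E z w}" unfolding common_def by blast
    then have "card {z \<in> V. S \<subseteq> common z} \<le> card {z \<in> V. \<forall>w\<in>S. adj E z w}"
      using fin by (intro card_mono) auto
    then show "card {z \<in> V. S \<subseteq> common z} \<le> s - 1"
      using Kss_free_card_common_neighbours_less[OF sg free S] by linarith
  qed
  also have "\<dots> = (s - 1) * (degree V E y choose s)"
    using n_subsets[OF finN] unfolding subsets_def N_def degree_def
    by (simp add: adj_commute[of E y])
  finally show ?thesis .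
qed

lemma card_codegree_ge_mult_choose_le:
  assumes sg: "simple_graph V E" and free: "Kss_free s V E"
  shows "card {z \<in> V. m \<le> codegree V E y z} * (m choose s) \<le> (s - 1) * (degree V E y choose s)"
proof -
  have fin: "finite V" using sg unfolding simple_graph_def by blast
  have "card {z \<in> V. m \<le> codegree V E y z} * (m choose s)
      = (\<Sum>z | z \<in> V \<and> m \<le> codegree V E y z. m choose s)"
    by simp
  also have "\<dots> \<le> (\<Sum>z | z \<in> V \<and> m \<le> codegree V E y z. codegree V E y z choose s)"
    by (intro sum_mono binomial_right_mono) auto
  also have "\<dots> \<le> (\<Sum>z\<in>V. codegree V E y z choose s)"
    using fin by (intro sum_mono2) auto
  also have "\<dots> \<le> (s - 1) * (degree V E y choose s)"
    by (rule sum_codegree_choose_le[OF sg free])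
  finally show ?thesis .
qed

lemma binomial_Suc_mult_Suc: "(n choose Suc k) * Suc k = (n choose k) * (n - k)"
proof (cases n)
  case (Suc n')
  have "(n choose Suc k) * Suc k = n * (n' choose k)"
    using Suc_times_binomial_eq[of n' k] Suc by simp
  also have "\<dots> = (n - k) * (n choose k)"
    using binomial_absorb_comp[of n k] Suc by simp
  finally show ?thesis by simp
qed simp

lemma binomial_mult_diff_power_le: "(a choose k) * (m - k) ^ k \<le> a ^ k * (m choose k)"
proof (induction k)
  case (Suc k)
  have "(a choose Suc k) * (m - Suc k) ^ Suc k * Suc k
      = ((a choose Suc k) * Suc k) * ((m - Suc k) ^ k * (m - Suc k))"
    by (simp only: power_Suc mult_ac)
  also have "\<dots> = ((a choose k) * (a - k)) * ((m - Suc k) ^ k * (m - Suc k))"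
    by (simp only: binomial_Suc_mult_Suc)
  also have "\<dots> = ((a choose k) * (m - Suc k) ^ k) * ((a - k) * (m - Suc k))"
    by (simp only: mult_ac)
  also have "\<dots> \<le> ((a choose k) * (m - k) ^ k) * (a * (m - k))"
    by (intro mult_mono power_mono) auto
  also have "\<dots> \<le> (a ^ k * (m choose k)) * (a * (m - k))"
    using Suc.IH by (intro mult_right_mono) auto
  also have "\<dots> = a ^ Suc k * ((m choose k) * (m - k))"
    by (simp add: algebra_simps)
  also have "\<dots> = (a ^ Suc k * (m choose Suc k)) * Suc k"
    by (simp only: binomial_Suc_mult_Suc mult.assoc)
  finally show ?case by (simp only: mult_le_cancel2)
qed simp

lemma card_codegree_ge_mult_power_le:
  assumes sg: "simple_graph V E" and free: "Kss_free s V E" and "s \<le> m"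
  shows "card {z \<in> V. m \<le> codegree V E y z} * (m - s) ^ s \<le> (s - 1) * degree V E y ^ s"
proof -
  let ?b = "card {z \<in> V. m \<le> codegree V E y z}" and ?D = "degree V E y"
  have "?b * (m - s) ^ s * (m choose s) = (?b * (m choose s)) * (m - s) ^ s"
    by (simp only: mult_ac)
  also have "\<dots> \<le> ((s - 1) * (?D choose s)) * (m - s) ^ s"
    using card_codegree_ge_mult_choose_le[OF sg free, of m y] by (rule mult_right_mono) simp
  also have "\<dots> \<le> (s - 1) * (?D ^ s * (m choose s))"
    using binomial_mult_diff_power_le[of ?D s m] by (simp add: mult.assoc)
  finally show ?thesis
    using \<open>s \<le> m\<close> by (simp add: mult.assoc)
qed

lemma card_codegree_ge_le:
  fixes M c :: real
  assumes sg: "simple_graph V E" and free: "Kss_free s V E" and "0 < s"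
    and M: "2 * real s \<le> M" and deg: "real (degree V E y) \<le> c * M" and "0 \<le> c"
  shows "real (card {z \<in> V. M \<le> real (codegree V E y z)}) \<le> real (s - 1) * (2 * c) ^ s"
proof -
  define m where "m = nat \<lceil>M\<rceil>"
  have m_iff: "M \<le> real k \<longleftrightarrow> m \<le> k" for k unfolding m_def by linarith
  have "M \<le> real m" using m_iff by simp
  then have "s \<le> m" using M by simp
  let ?b = "card {z \<in> V. m \<le> codegree V E y z}" and ?D = "degree V E y"
  define r where "r = real (m - s)"
  have b: "real ?b * r ^ s \<le> real (s - 1) * real ?D ^ s"
    using card_codegree_ge_mult_power_le[OF sg free \<open>s \<le> m\<close>, of y]
    unfolding r_def by (metis of_nat_le_iff of_nat_mult of_nat_power)
  have r: "M / 2 \<le> r" "0 < r"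
    unfolding r_def using \<open>s \<le> m\<close> \<open>M \<le> real m\<close> M \<open>0 < s\<close> by (auto simp: of_nat_diff)
  have "c * M \<le> c * (2 * r)" using r(1) \<open>0 \<le> c\<close> by (intro mult_left_mono) auto
  then have "real ?D ^ s \<le> (2 * c * r) ^ s" using deg by (intro power_mono) auto
  then have "real (s - 1) * real ?D ^ s \<le> (real (s - 1) * (2 * c) ^ s) * r ^ s"
    by (simp add: mult_left_mono power_mult_distrib mult.assoc)
  with b have "real ?b * r ^ s \<le> (real (s - 1) * (2 * c) ^ s) * r ^ s" by linarith
  then have "real ?b \<le> real (s - 1) * (2 * c) ^ s"
    using r(2) by (simp add: mult_le_cancel_right)
  moreover have "{z \<in> V. M \<le> real (codegree V E y z)} = {z \<in> V. m \<le> codegree V E y z}"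
    using m_iff by blast
  ultimately show ?thesis by simp
qed

section \<open>Growing low-codegree copies of a tree leaf by leaf\<close>

lemma mem_induced_copies_iff:
  "\<phi> \<in> induced_copies VT ET V E \<longleftrightarrow>
     \<phi> \<in> VT \<rightarrow>\<^sub>E V \<and> inj_on \<phi> VT \<and> pairwise (\<lambda>u v. adj E (\<phi> u) (\<phi> v) \<longleftrightarrow> adj ET u v) VT"
  unfolding induced_copies_def pairwise_def by blast

lemma finite_induced_copies: "finite VT \<Longrightarrow> finite V \<Longrightarrow> finite (induced_copies VT ET V E)"
  unfolding induced_copies_def by (rule finite_subset[OF _ finite_PiE]) auto

definition low_codegree_copies ::
    "'a set \<Rightarrow> 'a set set \<Rightarrow> real \<Rightarrow> 'b set \<Rightarrow> 'b set set \<Rightarrow> ('b \<Rightarrow> 'a) set" where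
  "low_codegree_copies V E M VT ET =
     {\<phi> \<in> induced_copies VT ET V E. pairwise (\<lambda>u v. real (codegree V E (\<phi> u) (\<phi> v)) < M) VT}"

lemma low_codegree_copies_subset: "low_codegree_copies V E M VT ET \<subseteq> induced_copies VT ET V E"
  unfolding low_codegree_copies_def by blast

lemma low_codegree_copies_subset_PiE: "low_codegree_copies V E M VT ET \<subseteq> VT \<rightarrow>\<^sub>E V"
  unfolding low_codegree_copies_def induced_copies_def by blast

lemma finite_low_codegree_copies:
  "finite V \<Longrightarrow> finite VT \<Longrightarrow> finite (low_codegree_copies V E M VT ET)"
  using low_codegree_copies_subset_PiE finite_PiE by (metis finite_subset)

lemma low_codegree_copies_singleton: "low_codegree_copies V E M {a} ET = {a} \<rightarrow>\<^sub>E V"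
  unfolding low_codegree_copies_def induced_copies_def pairwise_def by auto

definition leaf_candidates :: "'a set \<Rightarrow> 'a set set \<Rightarrow> real \<Rightarrow> 'b set \<Rightarrow> ('b \<Rightarrow> 'a) \<Rightarrow> 'b \<Rightarrow> 'a set" where
  "leaf_candidates V E M VT \<phi> p =
     {x \<in> V. adj E x (\<phi> p) \<and> x \<notin> \<phi> ` VT \<and> (\<forall>j\<in>VT - {p}. \<not> adj E (\<phi> j) x)
        \<and> (\<forall>j\<in>VT. real (codegree V E (\<phi> j) x) < M)}"

lemma low_codegree_copies_extend_leaf:
  assumes "l \<notin> VT" "p \<in> VT" "adj ET l p" and leaf: "\<forall>w. adj ET l w \<longrightarrow> w = p"
    and \<phi>: "\<phi> \<in> low_codegree_copies V E M VT (edges_without l ET)"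
    and x: "x \<in> leaf_candidates V E M VT \<phi> p"
  shows "\<phi>(l := x) \<in> low_codegree_copies V E M (insert l VT) ET"
proof -
  let ?\<psi> = "\<phi>(l := x)"
  have \<phi>_PiE: "\<phi> \<in> VT \<rightarrow>\<^sub>E V" and \<phi>_inj: "inj_on \<phi> VT"
    and \<phi>_adj: "pairwise (\<lambda>u v. adj E (\<phi> u) (\<phi> v) \<longleftrightarrow> adj (edges_without l ET) u v) VT"
    and \<phi>_codegree: "pairwise (\<lambda>u v. real (codegree V E (\<phi> u) (\<phi> v)) < M) VT"
    using \<phi> unfolding low_codegree_copies_def mem_induced_copies_iff by blast+
  have x_V: "x \<in> V" and x_adj_p: "adj E x (\<phi> p)" and x_new: "x \<notin> \<phi> ` VT"
    and x_nonadj: "\<forall>j\<in>VT - {p}. \<not> adj E (\<phi> j) x"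
    and x_codegree: "\<forall>j\<in>VT. real (codegree V E (\<phi> j) x) < M"
    using x unfolding leaf_candidates_def by blast+
  have \<psi>_VT: "?\<psi> j = \<phi> j" if "j \<in> VT" for j using that \<open>l \<notin> VT\<close> by auto
  have "?\<psi> \<in> insert l VT \<rightarrow>\<^sub>E V"
    using \<phi>_PiE x_V \<open>l \<notin> VT\<close> by (auto simp: PiE_iff extensional_def)
  moreover have "inj_on ?\<psi> (insert l VT)"
    using inj_on_fun_updI[OF \<phi>_inj x_new] x_new \<psi>_VT \<open>l \<notin> VT\<close> by (auto simp: inj_on_insert)
  moreover have "pairwise (\<lambda>u v. adj E (?\<psi> u) (?\<psi> v) \<longleftrightarrow> adj ET u v) (insert l VT)"
  proof -
    have new_edge: "adj E x (\<phi> y) \<longleftrightarrow> adj ET l y" if "y \<in> VT" for y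
    proof (cases "y = p")
      case False
      then show ?thesis using x_nonadj that leaf by (auto simp: adj_commute[of E x])
    qed (use x_adj_p \<open>adj ET l p\<close> in simp)
    have "pairwise (\<lambda>u v. adj E (?\<psi> u) (?\<psi> v) \<longleftrightarrow> adj ET u v) VT"
      using \<phi>_adj \<open>l \<notin> VT\<close> by (auto simp: pairwise_def adj_edges_without)
    then show ?thesis
      unfolding pairwise_insert using new_edge \<psi>_VT
      by (simp add: adj_commute[of E _ x] adj_commute[of ET _ l])
  qed
  moreover have "pairwise (\<lambda>u v. real (codegree V E (?\<psi> u) (?\<psi> v)) < M) (insert l VT)"
  proof -
    have "pairwise (\<lambda>u v. real (codegree V E (?\<psi> u) (?\<psi> v)) < M) VT"
      using \<phi>_codegree \<open>l \<notin> VT\<close> by (auto simp: pairwise_def)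
    then show ?thesis
      unfolding pairwise_insert using x_codegree \<psi>_VT by (simp add: codegree_commute[of V E x])
  qed
  ultimately show ?thesis unfolding low_codegree_copies_def mem_induced_copies_iff by blast
qed

lemma card_UN_le_card_mult:
  assumes "finite I" "\<And>i. i \<in> I \<Longrightarrow> real (card (A i)) \<le> b"
  shows "real (card (\<Union>i\<in>I. A i)) \<le> real (card I) * b"
proof -
  have "real (card (\<Union>i\<in>I. A i)) \<le> (\<Sum>i\<in>I. real (card (A i)))"
    using card_UN_le[OF assms(1), of A] by (metis of_nat_le_iff of_nat_sum)
  also have "\<dots> \<le> real (card I) * b"
    using assms(2) by (rule sum_bounded_above)
  finally show ?thesis .
qed

lemma card_common_neighbours_of_image_le:
  assumes "finite VT" "p \<in> VT" "0 \<le> M" and \<phi>: "\<phi> \<in> low_codegree_copies V E M VT ET"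
  shows "real (card (\<Union>j\<in>VT - {p}. {w \<in> V. adj E (\<phi> p) w \<and> adj E (\<phi> j) w})) \<le> real (card VT) * M"
proof -
  have "real (card (\<Union>j\<in>VT - {p}. {w \<in> V. adj E (\<phi> p) w \<and> adj E (\<phi> j) w}))
      \<le> real (card (VT - {p})) * M"
  proof (rule card_UN_le_card_mult)
    fix j assume "j \<in> VT - {p}"
    then show "real (card {w \<in> V. adj E (\<phi> p) w \<and> adj E (\<phi> j) w}) \<le> M"
      using \<phi> \<open>p \<in> VT\<close> unfolding low_codegree_copies_def pairwise_def codegree_def
      by (auto intro: less_imp_le)
  qed (use \<open>finite VT\<close> in simp)
  also have "\<dots> \<le> real (card VT) * M"
    using \<open>0 \<le> M\<close> \<open>finite VT\<close> by (intro mult_right_mono) (auto intro: card_mono)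
  finally show ?thesis .
qed

lemma card_leaf_candidates_ge:
  assumes fin: "finite V" and "finite VT" "p \<in> VT" "0 \<le> M"
    and \<phi>: "\<phi> \<in> low_codegree_copies V E M VT ET"
    and high: "\<forall>y\<in>V. real (card {z \<in> V. M \<le> real (codegree V E y z)}) \<le> B"
  shows "real (degree V E (\<phi> p)) - real (card VT) * (1 + M + B)
           \<le> real (card (leaf_candidates V E M VT \<phi> p))"
proof -
  define shared where "shared = (\<Union>j\<in>VT - {p}. {w \<in> V. adj E (\<phi> p) w \<and> adj E (\<phi> j) w})"
  define heavy where "heavy = (\<Union>j\<in>VT. {z \<in> V. M \<le> real (codegree V E (\<phi> j) z)})"
  define excluded where "excluded = \<phi> ` VT \<union> shared \<union> heavy"
  have "real (card heavy) \<le> real (card VT) * B"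
    using high \<phi> low_codegree_copies_subset_PiE unfolding heavy_def
    by (intro card_UN_le_card_mult \<open>finite VT\<close>) blast
  moreover have "real (card shared) \<le> real (card VT) * M"
    unfolding shared_def
    using card_common_neighbours_of_image_le[OF \<open>finite VT\<close> \<open>p \<in> VT\<close> \<open>0 \<le> M\<close> \<phi>] .
  moreover have "card excluded \<le> card (\<phi> ` VT) + card shared + card heavy"
    unfolding excluded_def by (meson add_le_mono card_Un_le le_refl order_trans)
  moreover have "card (\<phi> ` VT) \<le> card VT" using \<open>finite VT\<close> by (rule card_image_le)
  ultimately have card_excluded: "real (card excluded) \<le> real (card VT) * (1 + M + B)"
    by (simp add: algebra_simps)
  have "finite excluded"
    unfolding excluded_def shared_def heavy_def using fin \<open>finite VT\<close> by simp
  then have "card {x \<in> V. adj E x (\<phi> p)} - card excluded \<le> card ({x \<in> V. adj E x (\<phi> p)} - excluded)"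
    by (rule diff_card_le_card_Diff)
  also have "\<dots> \<le> card (leaf_candidates V E M VT \<phi> p)"
  proof (rule card_mono)
    show "finite (leaf_candidates V E M VT \<phi> p)" using fin unfolding leaf_candidates_def by simp
    show "{x \<in> V. adj E x (\<phi> p)} - excluded \<subseteq> leaf_candidates V E M VT \<phi> p"
      unfolding leaf_candidates_def excluded_def shared_def heavy_def
      by (auto simp: adj_commute[of E "\<phi> p"] not_le)
  qed
  finally show ?thesis
    using card_excluded unfolding degree_def by linarith
qed

lemma inj_on_fun_upd_Sigma:
  assumes "A \<subseteq> extensional S" "l \<notin> S"
  shows "inj_on (\<lambda>(f, x). f(l := x)) (Sigma A B)"
proof (rule inj_onI, clarsimp)
  fix f x g y
  assume "f \<in> A" "g \<in> A" and eq: "f(l := x) = g(l := y)"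
  have "f \<in> extensional S" "g \<in> extensional S" using assms(1) \<open>f \<in> A\<close> \<open>g \<in> A\<close> by auto
  then have "f l = g l" using extensional_arb[OF _ assms(2)] by metis
  then show "f = g \<and> x = y" using fun_cong[OF eq] by (metis fun_upd_apply ext)
qed

lemma card_low_codegree_copies_remove_leaf_le:
  assumes fin: "finite V"
    and deg: "\<forall>v\<in>V. \<delta> \<le> real (degree V E v)"
    and high: "\<forall>y\<in>V. real (card {z \<in> V. M \<le> real (codegree V E y z)}) \<le> B"
    and small: "real (card VT) * (1 + M + B) \<le> \<delta> / 2" and "0 \<le> M" "0 \<le> B"
    and "finite VT" "l \<in> VT" "p \<in> VT" "l \<noteq> p" "adj ET l p" and leaf: "\<forall>w. adj ET l w \<longrightarrow> w = p"
  shows "real (card (low_codegree_copies V E M (VT - {l}) (edges_without l ET))) * (\<delta> / 2)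
           \<le> real (card (low_codegree_copies V E M VT ET))"
proof -
  define VT' where "VT' = VT - {l}"
  define G' where "G' = low_codegree_copies V E M VT' (edges_without l ET)"
  define C where "C \<phi> = leaf_candidates V E M VT' \<phi> p" for \<phi>
  have "finite VT'" "p \<in> VT'" "l \<notin> VT'" "insert l VT' = VT"
    unfolding VT'_def using \<open>finite VT\<close> \<open>l \<in> VT\<close> \<open>p \<in> VT\<close> \<open>l \<noteq> p\<close> by auto
  have many_candidates: "\<delta> / 2 \<le> real (card (C \<phi>))" if "\<phi> \<in> G'" for \<phi>
  proof -
    have "\<phi> p \<in> V" using that \<open>p \<in> VT'\<close> low_codegree_copies_subset_PiE unfolding G'_def by blast
    have "real (card VT') * (1 + M + B) \<le> real (card VT) * (1 + M + B)"
      using \<open>0 \<le> M\<close> \<open>0 \<le> B\<close> \<open>finite VT\<close> unfolding VT'_def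
      by (intro mult_right_mono) (auto intro: card_mono)
    then show ?thesis
      using card_leaf_candidates_ge[OF fin \<open>finite VT'\<close> \<open>p \<in> VT'\<close> \<open>0 \<le> M\<close>, of \<phi>] that
        high deg \<open>\<phi> p \<in> V\<close> small
      unfolding G'_def C_def by fastforce
  qed
  have "real (card G') * (\<delta> / 2) \<le> (\<Sum>\<phi>\<in>G'. real (card (C \<phi>)))"
    by (rule sum_bounded_below) (rule many_candidates)
  also have "\<dots> = real (card (Sigma G' C))"
    using fin by (subst card_SigmaI) (auto simp: C_def leaf_candidates_def G'_def
        intro: finite_low_codegree_copies \<open>finite VT'\<close>)
  also have "\<dots> \<le> real (card (low_codegree_copies V E M VT ET))"
  proof (intro of_nat_mono card_inj_on_le)
    show "inj_on (\<lambda>(\<phi>, x). \<phi>(l := x)) (Sigma G' C)"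
      using low_codegree_copies_subset_PiE[of V E M VT' "edges_without l ET"] \<open>l \<notin> VT'\<close>
      unfolding G'_def by (intro inj_on_fun_upd_Sigma) (auto simp: PiE_def)
    show "(\<lambda>(\<phi>, x). \<phi>(l := x)) ` Sigma G' C \<subseteq> low_codegree_copies V E M VT ET"
      using low_codegree_copies_extend_leaf[OF \<open>l \<notin> VT'\<close> \<open>p \<in> VT'\<close> \<open>adj ET l p\<close> leaf]
        \<open>insert l VT' = VT\<close> unfolding G'_def C_def by auto
    show "finite (low_codegree_copies V E M VT ET)"
      using fin \<open>finite VT\<close> by (rule finite_low_codegree_copies)
  qed
  finally show ?thesis unfolding G'_def VT'_def .
qed

lemma card_low_codegree_copies_ge:
  assumes fin: "finite V"
    and deg: "\<forall>v\<in>V. \<delta> \<le> real (degree V E v)"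
    and high: "\<forall>y\<in>V. real (card {z \<in> V. M \<le> real (codegree V E y z)}) \<le> B"
    and small: "real t * (1 + M + B) \<le> \<delta> / 2" and "0 \<le> M" "0 \<le> B" "0 \<le> \<delta>"
    and "is_tree VT ET" "card VT \<le> t"
  shows "real (card V) * (\<delta> / 2) ^ (card VT - 1) \<le> real (card (low_codegree_copies V E M VT ET))"
  using assms(8,9)
proof (induction "card VT" arbitrary: VT ET)
  case 0
  then show ?case using tree_card_pos by fastforce
next
  case (Suc k)
  have "finite VT" using Suc.prems(1) by (rule tree_finite)
  show ?case
  proof (cases "k = 0")
    case True
    then obtain a where "VT = {a}" using Suc.hyps(2) card_1_singletonE by auto
    then show ?thesis by (simp add: low_codegree_copies_singleton card_PiE)
  next
    case False
    then have two: "card VT \<ge> 2" using Suc.hyps(2) by simp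
    obtain l p where lp: "l \<in> VT" "p \<in> VT" "l \<noteq> p" "adj ET l p" and leaf: "\<forall>w. adj ET l w \<longrightarrow> w = p"
      using tree_obtain_leaf[OF Suc.prems(1) two] by blast
    have "card (VT - {l}) = k" using Suc.hyps(2) lp(1) by simp
    moreover have "card (VT - {l}) \<le> t" using Suc.hyps(2) Suc.prems(2) lp(1) by simp
    ultimately have "real (card V) * (\<delta> / 2) ^ (k - 1)
        \<le> real (card (low_codegree_copies V E M (VT - {l}) (edges_without l ET)))"
      using Suc.hyps(1)[OF _ tree_remove_leaf[OF Suc.prems(1) two leaf]] by simp
    then have "real (card V) * (\<delta> / 2) ^ (k - 1) * (\<delta> / 2)
        \<le> real (card (low_codegree_copies V E M (VT - {l}) (edges_without l ET))) * (\<delta> / 2)"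
      using \<open>0 \<le> \<delta>\<close> by (intro mult_right_mono) auto
    then have "real (card V) * (\<delta> / 2) ^ k
        \<le> real (card (low_codegree_copies V E M (VT - {l}) (edges_without l ET))) * (\<delta> / 2)"
      using False power_minus_mult[of k "\<delta> / 2"] by (simp only: mult.assoc)
    also have "\<dots> \<le> real (card (low_codegree_copies V E M VT ET))"
    proof (rule card_low_codegree_copies_remove_leaf_le
        [OF fin deg high _ \<open>0 \<le> M\<close> \<open>0 \<le> B\<close> \<open>finite VT\<close> lp leaf])
      have "real (card VT) * (1 + M + B) \<le> real t * (1 + M + B)"
        using Suc.prems(2) \<open>0 \<le> M\<close> \<open>0 \<le> B\<close> by (intro mult_right_mono) auto
      then show "real (card VT) * (1 + M + B) \<le> \<delta> / 2" using small by linarith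
    qed
    finally show ?thesis using Suc.hyps(2)[symmetric] by simp
  qed
qed

lemma power_mult_le_power_mult:
  fixes X :: real
  assumes "1 \<le> X" "0 < s" "i \<le> j" "a \<le> b"
  shows "X ^ i * real s ^ a \<le> X ^ j * real s ^ b"
  using assms by (intro mult_mono power_increasing) auto

lemma codegree_threshold_ge:
  fixes K \<delta> :: real
  assumes "1 < K" "0 < t" "0 < s" and big: "(4 * K * real t) ^ (6 * s) * real s ^ 3 \<le> K * \<delta>"
  shows "2 * real s \<le> \<delta> / (4 * real t)"
proof -
  define X where "X = 4 * K * real t"
  have "4 \<le> X" unfolding X_def using assms mult_mono[of 1 K 1 "real t"] by simp
  have "K * (4 * real t * (4 * real s)) = X * (4 * real s)" unfolding X_def by simp
  also have "\<dots> \<le> X ^ 2 * real s ^ 1"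
    using \<open>4 \<le> X\<close> by (simp add: power2_eq_square mult_right_mono)
  also have "\<dots> \<le> X ^ (6 * s) * real s ^ 3"
    using \<open>4 \<le> X\<close> \<open>0 < s\<close> by (intro power_mult_le_power_mult) auto
  also have "\<dots> \<le> K * \<delta>" using big unfolding X_def .
  finally have "4 * real t * (4 * real s) \<le> \<delta>"
    by (rule mult_left_le_imp_le) (use \<open>1 < K\<close> in simp)
  moreover have "2 * real s * (4 * real t) \<le> 4 * real t * (4 * real s)"
    by (simp add: mult_right_mono)
  ultimately have "2 * real s * (4 * real t) \<le> \<delta>" by linarith
  then show ?thesis using \<open>0 < t\<close> by (subst pos_le_divide_eq) auto
qed

lemma excluded_bound_le_half:
  fixes K \<delta> :: real
  assumes "1 < K" "0 < t" "0 < s" and big: "(4 * K * real t) ^ (6 * s) * real s ^ 3 \<le> K * \<delta>"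
  shows "real t * (1 + \<delta> / (4 * real t) + real (s - 1) * (8 * K * real t) ^ s) \<le> \<delta> / 2"
proof -
  define X where "X = 4 * K * real t"
  define B where "B = real (s - 1) * (2 * X) ^ s"
  have "4 \<le> X" unfolding X_def using assms mult_mono[of 1 K 1 "real t"] by simp
  have "1 \<le> (2 * X) ^ s" using \<open>4 \<le> X\<close> by (intro one_le_power) simp
  then have "1 + B \<le> real s * (2 * X) ^ s"
    unfolding B_def using \<open>0 < s\<close> by (simp add: of_nat_diff algebra_simps)
  also have "\<dots> \<le> real s * X ^ (2 * s)"
  proof -
    have "2 * X \<le> X ^ 2" using \<open>4 \<le> X\<close> by (simp add: power2_eq_square mult_right_mono)
    then have "(2 * X) ^ s \<le> X ^ (2 * s)"
      unfolding power_mult using \<open>4 \<le> X\<close> by (intro power_mono) auto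
    then show ?thesis by (rule mult_left_mono) simp
  qed
  finally have excess: "1 + B \<le> real s * X ^ (2 * s)" .
  have "K * (4 * real t * (1 + B)) = X * (1 + B)" unfolding X_def by (simp add: mult_ac)
  also have "\<dots> \<le> X * (real s * X ^ (2 * s))"
    using excess \<open>4 \<le> X\<close> by (intro mult_left_mono) auto
  also have "\<dots> = X ^ (2 * s + 1) * real s ^ 1" by (simp add: mult_ac)
  also have "\<dots> \<le> X ^ (6 * s) * real s ^ 3"
    using \<open>4 \<le> X\<close> \<open>0 < s\<close> by (intro power_mult_le_power_mult) auto
  also have "\<dots> \<le> K * \<delta>" using big unfolding X_def .
  finally have "4 * real t * (1 + B) \<le> \<delta>"
    by (rule mult_left_le_imp_le) (use \<open>1 < K\<close> in simp)
  moreover have "real t * (1 + \<delta> / (4 * real t) + B) = \<delta> / 4 + real t * (1 + B)"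
    using \<open>0 < t\<close> by (simp add: algebra_simps)
  moreover have "8 * K * real t = 2 * X" unfolding X_def by simp
  then have "real (s - 1) * (8 * K * real t) ^ s = B" unfolding B_def by (simp only:)
  ultimately show ?thesis by (simp only: mult.assoc)
qed

lemma card_induced_copies_ge:
  fixes K \<delta> :: real
  assumes tree: "is_tree VT ET" "card VT = t" and sg: "simple_graph V E" and free: "Kss_free s V E"
    and "1 < K" "0 < s"
    and deg: "\<forall>v\<in>V. \<delta> \<le> real (degree V E v) \<and> real (degree V E v) \<le> K * \<delta>"
    and big: "(4 * K * real t) ^ (6 * s) * real s ^ 3 \<le> K * \<delta>"
  shows "real (card V) * (\<delta> / 2) ^ (t - 1) \<le> real (card (induced_copies VT ET V E))"
proof -
  have fin: "finite V" using sg unfolding simple_graph_def by blast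
  have "0 < t" using tree_card_pos[OF tree(1)] tree(2) by simp
  define M where "M = \<delta> / (4 * real t)"
  define B where "B = real (s - 1) * (8 * K * real t) ^ s"
  have "2 * real s \<le> M"
    unfolding M_def using codegree_threshold_ge[OF \<open>1 < K\<close> \<open>0 < t\<close> \<open>0 < s\<close> big] .
  have high: "\<forall>y\<in>V. real (card {z \<in> V. M \<le> real (codegree V E y z)}) \<le> B"
  proof
    fix y assume "y \<in> V"
    then have "real (degree V E y) \<le> (4 * K * real t) * M"
      using deg \<open>0 < t\<close> unfolding M_def by simp
    then show "real (card {z \<in> V. M \<le> real (codegree V E y z)}) \<le> B"
      using card_codegree_ge_le[OF sg free \<open>0 < s\<close> \<open>2 * real s \<le> M\<close>, of y "4 * K * real t"]
        \<open>1 < K\<close> unfolding B_def by (simp add: mult.assoc)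
  qed
  have "real t * (1 + M + B) \<le> \<delta> / 2"
    unfolding M_def B_def using excluded_bound_le_half[OF \<open>1 < K\<close> \<open>0 < t\<close> \<open>0 < s\<close> big] .
  moreover have "0 \<le> M" using \<open>2 * real s \<le> M\<close> of_nat_0_le_iff[of s] by linarith
  moreover have "0 \<le> B" "0 \<le> \<delta>"
    using \<open>1 < K\<close> \<open>0 \<le> M\<close> \<open>0 < t\<close> unfolding B_def M_def by (simp_all add: zero_le_divide_iff)
  ultimately have "real (card V) * (\<delta> / 2) ^ (t - 1)
      \<le> real (card (low_codegree_copies V E M VT ET))"
    using card_low_codegree_copies_ge[OF fin _ high _ _ _ _ tree(1)] deg tree(2) by simp
  also have "\<dots> \<le> real (card (induced_copies VT ET V E))"
  proof (intro of_nat_mono card_mono)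
    show "finite (induced_copies VT ET V E)"
      using tree_finite[OF tree(1)] fin by (rule finite_induced_copies)
  qed (rule low_codegree_copies_subset)
  finally show ?thesis .
qed

theorem theorem1p3:
  fixes VT :: "'b set" and ET :: "'b set set" and V :: "'a set" and E :: "'a set set"
    and t s n :: nat and K d :: real
  assumes "is_tree VT ET" and "card VT = t"
    and "K > 1" and "s > 0"
    and "simple_graph V E" and "card V = n"
    and "almost_regular K V E" and "Kss_free s V E"
    and "d = average_degree V E"
    and "d \<ge> (4 * K * real t) ^ (6 * s) * real s ^ 3"
  shows "real (card (induced_copies VT ET V E)) \<ge> real n * (d / (2 * K)) ^ (t - 1)"
proof -
  have fin: "finite V" using assms(5) unfolding simple_graph_def by blast
  have "0 < t" using tree_card_pos[OF assms(1)] assms(2) by simp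
  then have "0 < (4 * K * real t) ^ (6 * s) * real s ^ 3" using assms(3,4) by simp
  then have "0 < d" using assms(10) by linarith
  then have "V \<noteq> {}" using assms(9) unfolding average_degree_def by auto
  define \<delta> where "\<delta> = real (min_degree V E)"
  have "\<forall>v\<in>V. \<delta> \<le> real (degree V E v) \<and> real (degree V E v) \<le> K * \<delta>"
    using min_degree_le_degree[OF fin] degree_le_max_degree[OF fin] assms(7)
    unfolding almost_regular_def \<delta>_def by (meson of_nat_le_iff order_trans)
  moreover have "d \<le> K * \<delta>"
    using average_degree_le_max_degree[OF assms(5) \<open>V \<noteq> {}\<close>] assms(7,9)
    unfolding almost_regular_def \<delta>_def by linarith
  ultimately have "real n * (\<delta> / 2) ^ (t - 1) \<le> real (card (induced_copies VT ET V E))"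
    using card_induced_copies_ge[OF assms(1,2,5,8,3,4)] assms(6,10) by auto
  moreover have "real n * (d / (2 * K)) ^ (t - 1) \<le> real n * (\<delta> / 2) ^ (t - 1)"
    using \<open>d \<le> K * \<delta>\<close> \<open>0 < d\<close> assms(3)
    by (intro mult_left_mono power_mono) (auto simp: pos_divide_le_eq mult.commute)
  ultimately show ?thesis by linarith
qed

end
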